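(* Let $\phi_+,\phi_-,\psi\ge0$ and let $\eta$ have the standard Cauchy distribution (i.e. density $f_1(x)=1/\{\pi(1+x^2)\}$). Then $E\log\{\phi_+(\eta^+)^2+\phi_-(\eta^-)^2+\psi\}=\log[(\sqrt{\phi_+}+\sqrt\psi)(\sqrt{\phi_-}+\sqrt\psi)]$.
   Context: $x^+=\max\{x,0\}$, $x^-=-\min\{x,0\}$. This quantity is the top Lyapunov exponent $\gamma_1$ of the sAGARCH(1,1) model $y_t=\sigma_t\eta_t$, $\sigma_t^2=\omega+\phi_+(y_{t-1}^+)^2+\phi_-(y_{t-1}^-)^2+\psi\sigma_{t-1}^2$ with stable exponent $\alpha=1$. *)

theory Defs
  imports "HOL-Probability.Probability"
begin

definition cauchy_density :: "real \<Rightarrow> real" where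
  "cauchy_density x = 1 / (pi * (1 + x\<^sup>2))"

text \<open>The law of a standard Cauchy variable eta, as a measure on the reals.\<close>
definition cauchy_measure :: "real measure" where
  "cauchy_measure = density lborel (\<lambda>x. ennreal (cauchy_density x))"

definition pos_part :: "real \<Rightarrow> real" where "pos_part x = max x 0"
definition neg_part :: "real \<Rightarrow> real" where "neg_part x = - min x 0"

end

theory Submission
  imports Defs
begin

text \<open>Splitting the line at 0 and using the symmetry of the Cauchy density, everything reduces to
  \<open>\<integral>\<^sub>0\<^sup>\<infinity> ln (p x\<^sup>2 + q) dx / (\<pi>(1 + x\<^sup>2)) = ln (\<surd>p + \<surd>q)\<close>.
  For \<open>q > 0\<close> the integrand is \<open>ln q + ln (1 + c\<^sup>2x\<^sup>2)\<close> with \<open>c = \<surd>(p/q)\<close>; writing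
  \<open>ln (1 + c\<^sup>2x\<^sup>2) = \<integral>\<^sub>0\<^sup>c 2tx\<^sup>2/(1 + t\<^sup>2x\<^sup>2) dt\<close> and integrating in \<open>x\<close> first (partial fractions)
  leaves \<open>\<integral>\<^sub>0\<^sup>c dt/(1 + t) = ln (1 + c)\<close>. For \<open>q = 0\<close> one needs \<open>\<integral>\<^sub>0\<^sup>\<infinity> ln x dx/(1 + x\<^sup>2) = 0\<close>,
  which holds because the Cauchy law on \<open>(0, \<infinity>)\<close> is invariant under \<open>x \<mapsto> 1/x\<close>.
  If \<open>R = 0\<close> then \<open>\<psi> = 0\<close> and \<open>g\<close> vanishes on a half-line, which has probability \<open>1/2\<close>.\<close>

lemma cauchy_density_pos: "0 < cauchy_density x"
  unfolding cauchy_density_def by (simp add: add_pos_nonneg)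

lemma cauchy_density_minus [simp]: "cauchy_density (- x) = cauchy_density x"
  unfolding cauchy_density_def by simp

lemma borel_measurable_cauchy_density [measurable]: "cauchy_density \<in> borel_measurable borel"
  unfolding cauchy_density_def by measurable

lemma cauchy_density_inverse: "x \<noteq> 0 \<Longrightarrow> cauchy_density (1/x) / x\<^sup>2 = cauchy_density x"
proof -
  assume "x \<noteq> 0"
  then have "pi * (1 + (1/x)\<^sup>2) * x\<^sup>2 = pi * (1 + x\<^sup>2)"
    by (simp add: field_simps)
  then show ?thesis
    unfolding cauchy_density_def by (simp add: divide_divide_eq_left)
qed

lemma nn_integral_FTC_Icc_real:
  fixes f F :: "real \<Rightarrow> real"
  assumes "a \<le> b"
    and "\<And>x. a \<le> x \<Longrightarrow> x \<le> b \<Longrightarrow> (F has_real_derivative f x) (at x)"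
    and "\<And>x. a \<le> x \<Longrightarrow> x \<le> b \<Longrightarrow> isCont f x"
    and nonneg: "\<And>x. a \<le> x \<Longrightarrow> x \<le> b \<Longrightarrow> 0 \<le> f x"
  shows "(\<integral>\<^sup>+x. ennreal (f x * indicator {a..b} x) \<partial>lborel) = ennreal (F b - F a)"
proof -
  have "has_bochner_integral lborel (\<lambda>x. f x * indicator {a..b} x) (F b - F a)"
    by (rule has_bochner_integral_FTC_Icc_real) (use assms in auto)
  then show ?thesis
    using nonneg by (subst nn_integral_eq_integral)
      (auto simp: has_bochner_integral_iff indicator_def intro!: AE_I2)
qed

lemma has_bochner_integral_Ioi_of_nn_integral_Ici:
  fixes f :: "real \<Rightarrow> real"
  assumes [measurable]: "f \<in> borel_measurable borel"
    and nonneg: "\<And>x. 0 < x \<Longrightarrow> 0 \<le> f x"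
    and integral: "(\<integral>\<^sup>+x. ennreal (f x) * indicator {0..} x \<partial>lborel) = ennreal r" and "0 \<le> r"
  shows "has_bochner_integral lborel (\<lambda>x. indicator {0<..} x * f x) r"
proof (rule has_bochner_integral_nn_integral)
  show "AE x in lborel. 0 \<le> indicator {0<..} x * f x"
    by (auto intro!: AE_I2 nonneg simp: indicator_def)
  show "(\<integral>\<^sup>+x. ennreal (indicator {0<..} x * f x) \<partial>lborel) = ennreal r"
    unfolding integral[symmetric] using AE_lborel_singleton[of 0]
    by (intro nn_integral_cong_AE) (auto elim!: eventually_mono split: split_indicator)
qed (use \<open>0 \<le> r\<close> in auto)

lemma has_bochner_integral_lborel_iff_absolutely_integrable:
  fixes f :: "real \<Rightarrow> real"
  assumes [measurable]: "f \<in> borel_measurable borel" "S \<in> sets borel"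
  shows "has_bochner_integral lborel (\<lambda>x. indicator S x * f x) r \<longleftrightarrow>
         f absolutely_integrable_on S \<and> integral S f = r"
proof -
  have m: "(\<lambda>x. indicator S x * f x) \<in> borel_measurable lborel" by measurable
  have "f absolutely_integrable_on S \<longleftrightarrow> integrable lborel (\<lambda>x. indicator S x * f x)"
    unfolding set_integrable_def using integrable_completion[OF m] by simp
  moreover have "f absolutely_integrable_on S \<Longrightarrow> integral S f = (\<integral>x. indicator S x * f x \<partial>lborel)"
    using set_lebesgue_integral_eq_integral(2)[of S f] integral_completion[OF m]
    unfolding set_lebesgue_integral_def by simp
  ultimately show ?thesis by (auto simp: has_bochner_integral_iff)
qed

lemma has_bochner_integral_lborel_reflect:
  fixes f :: "real \<Rightarrow> real"
  assumes [measurable]: "f \<in> borel_measurable borel"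
    and "has_bochner_integral lborel (\<lambda>x. f (- x)) r"
  shows "has_bochner_integral lborel f r"
proof -
  have "has_bochner_integral (distr lborel borel uminus) f r"
    using assms(2) by (intro has_bochner_integral_distr) auto
  then show ?thesis
    by (simp add: lborel_distr_uminus)
qed

lemma has_bochner_integral_lborel_split_at_0:
  fixes f :: "real \<Rightarrow> real"
  assumes [measurable]: "f \<in> borel_measurable borel"
    and pos: "has_bochner_integral lborel (\<lambda>x. indicator {0<..} x * f x) a"
    and neg: "has_bochner_integral lborel (\<lambda>x. indicator {0<..} x * f (- x)) b"
  shows "has_bochner_integral lborel f (a + b)"
proof -
  have "has_bochner_integral lborel (\<lambda>x. indicator {..<0} x * f x) b"
    by (rule has_bochner_integral_lborel_reflect) (use neg in \<open>auto simp: indicator_def\<close>)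
  then have "has_bochner_integral lborel (\<lambda>x. indicator {0<..} x * f x + indicator {..<0} x * f x) (a + b)"
    using pos by (rule has_bochner_integral_add[rotated])
  then show ?thesis
    using AE_lborel_singleton[of 0]
    by (subst (asm) has_bochner_integral_cong_AE) (auto elim!: eventually_mono simp: indicator_def)
qed

lemma nn_integral_cauchy_Ici: "(\<integral>\<^sup>+x. ennreal (cauchy_density x) * indicator {0..} x \<partial>lborel) = ennreal (1/2)"
proof -
  have "(\<integral>\<^sup>+x. ennreal (cauchy_density x) * indicator {0..} x \<partial>lborel) = ennreal (1/2 - arctan 0 / pi)"
  proof (rule nn_integral_FTC_atLeast)
    fix x :: real
    have "((\<lambda>x. arctan x / pi) has_real_derivative inverse (1 + x\<^sup>2) / pi) (at x)"
      by (auto intro!: derivative_eq_intros)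
    then show "((\<lambda>x. arctan x / pi) has_real_derivative cauchy_density x) (at x)"
      by (simp add: cauchy_density_def divide_inverse mult.commute)
    show "0 \<le> cauchy_density x"
      using cauchy_density_pos less_imp_le by blast
  next
    have "((\<lambda>x. arctan x / pi) \<longlongrightarrow> (pi/2) / pi) at_top"
      by (intro tendsto_intros tendsto_arctan_at_top) simp
    then show "((\<lambda>x. arctan x / pi) \<longlongrightarrow> 1/2) at_top"
      by simp
  qed simp
  then show ?thesis by simp
qed

lemma has_bochner_integral_cauchy_Ioi:
  "has_bochner_integral lborel (\<lambda>x. indicator {0<..} x * cauchy_density x) (1/2)"
  by (rule has_bochner_integral_Ioi_of_nn_integral_Ici[OF _ _ nn_integral_cauchy_Ici])
     (auto simp: less_imp_le[OF cauchy_density_pos])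

lemma has_bochner_integral_cauchy_density: "has_bochner_integral lborel cauchy_density 1"
  using has_bochner_integral_lborel_split_at_0[of cauchy_density "1/2" "1/2"]
    has_bochner_integral_cauchy_Ioi by simp

lemma nn_integral_cauchy_ln_derivative:
  fixes t :: real
  assumes t: "0 < t" "t \<noteq> 1"
  shows "(\<integral>\<^sup>+x. ennreal (cauchy_density x * (2*t*x\<^sup>2 / (1 + t\<^sup>2*x\<^sup>2))) * indicator {0..} x \<partial>lborel)
       = ennreal (1/(1+t))"
proof -
  \<comment> \<open>partial fractions: \<open>x\<^sup>2/((1+t\<^sup>2x\<^sup>2)(1+x\<^sup>2)) = (1/(1+x\<^sup>2) - 1/(1+t\<^sup>2x\<^sup>2))/(t\<^sup>2-1)\<close>\<close>
  define F where "F x = 2*t / (pi*(t\<^sup>2-1)) * (arctan x - arctan (t*x) / t)" for x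
  have t2: "t\<^sup>2 - 1 \<noteq> 0"
    using t by (smt (verit) power2_eq_1_iff)
  have "(\<integral>\<^sup>+x. ennreal (cauchy_density x * (2*t*x\<^sup>2 / (1 + t\<^sup>2*x\<^sup>2))) * indicator {0..} x \<partial>lborel)
      = ennreal (1/(1+t) - F 0)"
  proof (rule nn_integral_FTC_atLeast)
    fix x :: real
    have "0 < 1 + t\<^sup>2*x\<^sup>2" "0 < 1 + x\<^sup>2"
      by (simp_all add: add_pos_nonneg)
    then show "0 \<le> cauchy_density x * (2*t*x\<^sup>2 / (1 + t\<^sup>2*x\<^sup>2))"
      using t cauchy_density_pos[of x] by simp
    have "(F has_real_derivative 2*t / (pi*(t\<^sup>2-1)) * (inverse (1 + x\<^sup>2) - inverse (1 + (t*x)\<^sup>2))) (at x)"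
      unfolding F_def using t t2 by (auto intro!: derivative_eq_intros)
    moreover have "2*t / (pi*(t\<^sup>2-1)) * (inverse (1 + x\<^sup>2) - inverse (1 + (t*x)\<^sup>2))
        = cauchy_density x * (2*t*x\<^sup>2 / (1 + t\<^sup>2*x\<^sup>2))"
    proof -
      have "inverse (1 + x\<^sup>2) - inverse (1 + (t*x)\<^sup>2) = (t\<^sup>2-1) * x\<^sup>2 / ((1 + t\<^sup>2*x\<^sup>2) * (1 + x\<^sup>2))"
        using \<open>0 < 1 + t\<^sup>2*x\<^sup>2\<close> \<open>0 < 1 + x\<^sup>2\<close> by (simp add: field_simps power_mult_distrib)
      then show ?thesis
        using t2 by (simp add: cauchy_density_def ac_simps)
    qed
    ultimately show "(F has_real_derivative cauchy_density x * (2*t*x\<^sup>2 / (1 + t\<^sup>2*x\<^sup>2))) (at x)"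
      by simp
  next
    have "((\<lambda>x. arctan (t*x)) \<longlongrightarrow> pi/2) at_top"
      using t by (intro filterlim_compose[OF tendsto_arctan_at_top]
          filterlim_tendsto_pos_mult_at_top[OF tendsto_const]) (auto simp: filterlim_ident)
    then have "(F \<longlongrightarrow> 2*t / (pi*(t\<^sup>2-1)) * (pi/2 - (pi/2) / t)) at_top"
      unfolding F_def using t by (intro tendsto_intros tendsto_arctan_at_top) auto
    moreover have "2*t / (pi*(t\<^sup>2-1)) * (pi/2 - (pi/2) / t) = 1/(1+t)"
      using t t2 by (simp add: field_simps power2_eq_square)
    ultimately show "(F \<longlongrightarrow> 1/(1+t)) at_top"
      by simp
  qed measurable
  then show ?thesis
    by (simp add: F_def)
qed

lemma nn_integral_cauchy_ln_one_plus:
  fixes c :: real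
  assumes c: "0 \<le> c"
  shows "(\<integral>\<^sup>+x. ennreal (cauchy_density x * ln (1 + c\<^sup>2*x\<^sup>2)) * indicator {0..} x \<partial>lborel) = ennreal (ln (1 + c))"
proof -
  define k where "k t x = ennreal (cauchy_density x) * ennreal (2*t*x\<^sup>2 / (1 + t\<^sup>2*x\<^sup>2) * indicator {0..c} t)
      * indicator {0..} x" for t x :: real
  have integral_t: "(\<integral>\<^sup>+t. k t x \<partial>lborel) = ennreal (cauchy_density x * ln (1 + c\<^sup>2*x\<^sup>2)) * indicator {0..} x"
    for x :: real
  proof -
    have pos: "0 < 1 + t\<^sup>2*x\<^sup>2" for t
      by (simp add: add_pos_nonneg)
    have "(\<integral>\<^sup>+t. ennreal (2*t*x\<^sup>2 / (1 + t\<^sup>2*x\<^sup>2) * indicator {0..c} t) \<partial>lborel)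
        = ennreal (ln (1 + c\<^sup>2*x\<^sup>2) - ln (1 + 0\<^sup>2*x\<^sup>2))"
    proof (rule nn_integral_FTC_Icc_real)
      fix t :: real
      assume "0 \<le> t" "t \<le> c"
      show "((\<lambda>t. ln (1 + t\<^sup>2*x\<^sup>2)) has_real_derivative 2*t*x\<^sup>2 / (1 + t\<^sup>2*x\<^sup>2)) (at t)"
        using pos[of t] by (auto intro!: derivative_eq_intros simp: field_simps)
      show "isCont (\<lambda>t. 2*t*x\<^sup>2 / (1 + t\<^sup>2*x\<^sup>2)) t"
        using pos by (auto intro!: continuous_intros simp: less_imp_neq[symmetric])
      show "0 \<le> 2*t*x\<^sup>2 / (1 + t\<^sup>2*x\<^sup>2)"
        using \<open>0 \<le> t\<close> pos[of t] by simp
    qed (use c in auto)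
    then have "(\<integral>\<^sup>+t. k t x \<partial>lborel) = ennreal (cauchy_density x) * ennreal (ln (1 + c\<^sup>2*x\<^sup>2)) * indicator {0..} x"
      unfolding k_def by (simp add: nn_integral_multc nn_integral_cmult)
    then show ?thesis
      using cauchy_density_pos[of x] by (simp add: ennreal_mult)
  qed
  have integral_x: "(\<integral>\<^sup>+x. k t x \<partial>lborel) = ennreal (1/(1+t) * indicator {0..c} t)"
    if "t \<noteq> 0" "t \<noteq> 1" for t :: real
  proof (cases "0 \<le> t \<and> t \<le> c")
    case True
    have "(\<integral>\<^sup>+x. k t x \<partial>lborel)
        = (\<integral>\<^sup>+x. ennreal (cauchy_density x * (2*t*x\<^sup>2 / (1 + t\<^sup>2*x\<^sup>2))) * indicator {0..} x \<partial>lborel)"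
      using True less_imp_le[OF cauchy_density_pos]
      by (intro nn_integral_cong) (simp add: k_def ennreal_mult[symmetric] add_pos_nonneg)
    also have "\<dots> = ennreal (1/(1+t))"
      using that True by (intro nn_integral_cauchy_ln_derivative) auto
    finally show ?thesis
      using True by simp
  qed (auto simp: k_def)
  have "(\<integral>\<^sup>+x. ennreal (cauchy_density x * ln (1 + c\<^sup>2*x\<^sup>2)) * indicator {0..} x \<partial>lborel)
      = (\<integral>\<^sup>+x. \<integral>\<^sup>+t. k t x \<partial>lborel \<partial>lborel)"
    by (simp add: integral_t)
  also have "\<dots> = (\<integral>\<^sup>+t. \<integral>\<^sup>+x. k t x \<partial>lborel \<partial>lborel)"
    by (rule lborel_pair.Fubini') (simp add: k_def case_prod_unfold)
  also have "\<dots> = (\<integral>\<^sup>+t. ennreal (1/(1+t) * indicator {0..c} t) \<partial>lborel)"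
  proof (rule nn_integral_cong_AE)
    show "AE t in lborel. (\<integral>\<^sup>+x. k t x \<partial>lborel) = ennreal (1/(1+t) * indicator {0..c} t)"
      using AE_lborel_singleton[of 0] AE_lborel_singleton[of 1]
      by eventually_elim (simp add: integral_x)
  qed
  also have "\<dots> = ennreal (ln (1 + c) - ln (1 + 0))"
    by (rule nn_integral_FTC_Icc_real)
       (use c in \<open>auto intro!: derivative_eq_intros continuous_intros simp: field_simps\<close>)
  finally show ?thesis
    by simp
qed

lemma has_bochner_integral_cauchy_ln_one_plus:
  "0 \<le> c \<Longrightarrow> has_bochner_integral lborel
     (\<lambda>x. indicator {0<..} x * (cauchy_density x * ln (1 + c\<^sup>2*x\<^sup>2))) (ln (1 + c))"
  by (rule has_bochner_integral_Ioi_of_nn_integral_Ici[OF _ _ nn_integral_cauchy_ln_one_plus])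
     (auto simp: less_imp_le[OF cauchy_density_pos])

lemma has_bochner_integral_cauchy_inversion:
  fixes h :: "real \<Rightarrow> real"
  assumes [measurable]: "h \<in> borel_measurable borel"
    and "has_bochner_integral lborel (\<lambda>x. indicator {0<..} x * (cauchy_density x * h x)) r"
  shows "has_bochner_integral lborel (\<lambda>x. indicator {0<..} x * (cauchy_density x * h (1/x))) r"
proof -
  have inv_image: "(\<lambda>x. 1/x) ` {0<..} = {0::real<..}"
    by (auto simp: image_iff intro!: bexI[where x="1/_"])
  have "(\<lambda>y. cauchy_density y * h y) absolutely_integrable_on (\<lambda>x. 1/x) ` {0<..} \<and>
        integral ((\<lambda>x. 1/x) ` {0<..}) (\<lambda>y. cauchy_density y * h y) = r"
    using assms(2) unfolding inv_image
    by (subst (asm) has_bochner_integral_lborel_iff_absolutely_integrable) auto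
  then have "(\<lambda>x. \<bar>- 1/x\<^sup>2\<bar> *\<^sub>R (cauchy_density (1/x) * h (1/x))) absolutely_integrable_on {0<..} \<and>
        integral {0<..} (\<lambda>x. \<bar>- 1/x\<^sup>2\<bar> *\<^sub>R (cauchy_density (1/x) * h (1/x))) = r"
    by (subst has_absolute_integral_change_of_variables_real[where g="\<lambda>x. 1/x"])
       (auto intro!: derivative_eq_intros simp: inj_on_def power2_eq_square)
  moreover have jacobian: "\<bar>- 1/x\<^sup>2\<bar> *\<^sub>R (cauchy_density (1/x) * h (1/x)) = cauchy_density x * h (1/x)"
    if "x \<in> {0<..}" for x
  proof -
    have "\<bar>- 1/x\<^sup>2\<bar> *\<^sub>R (cauchy_density (1/x) * h (1/x)) = cauchy_density (1/x) / x\<^sup>2 * h (1/x)"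
      by simp
    also have "\<dots> = cauchy_density x * h (1/x)"
      using that by (simp add: cauchy_density_inverse)
    finally show ?thesis .
  qed
  moreover have "set_integrable lebesgue {0<..} (\<lambda>x. \<bar>- 1/x\<^sup>2\<bar> *\<^sub>R (cauchy_density (1/x) * h (1/x)))
      \<longleftrightarrow> set_integrable lebesgue {0<..} (\<lambda>x. cauchy_density x * h (1/x))"
    by (rule set_integrable_cong) (rule refl jacobian | assumption)+
  moreover have "integral {0<..} (\<lambda>x. \<bar>- 1/x\<^sup>2\<bar> *\<^sub>R (cauchy_density (1/x) * h (1/x)))
      = integral {0<..} (\<lambda>x. cauchy_density x * h (1/x))"
    by (rule Henstock_Kurzweil_Integration.integral_cong) (rule jacobian)
  ultimately have "(\<lambda>x. cauchy_density x * h (1/x)) absolutely_integrable_on {0<..} \<and>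
        integral {0<..} (\<lambda>x. cauchy_density x * h (1/x)) = r"
    by simp
  then show ?thesis
    by (subst has_bochner_integral_lborel_iff_absolutely_integrable) auto
qed

lemma has_bochner_integral_cauchy_ln_sq:
  "has_bochner_integral lborel (\<lambda>x. indicator {0<..} x * (cauchy_density x * ln (x\<^sup>2))) 0"
proof -
  have h: "has_bochner_integral lborel
      (\<lambda>x. indicator {0<..} x * (cauchy_density x * ln (1 + 1\<^sup>2*x\<^sup>2))
         - indicator {0<..} x * (cauchy_density x * ln (1 + 1\<^sup>2*(1/x)\<^sup>2))) (ln (1 + 1) - ln (1 + 1))"
    by (intro has_bochner_integral_diff has_bochner_integral_cauchy_inversion
        has_bochner_integral_cauchy_ln_one_plus) auto
  have ln_sq: "ln (1 + x\<^sup>2) - ln (1 + (1/x)\<^sup>2) = ln (x\<^sup>2)" if "0 < x" for x :: real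
  proof -
    have "1 + x\<^sup>2 = x\<^sup>2 * (1 + (1/x)\<^sup>2)"
      using that by (simp add: field_simps)
    moreover have "0 < 1 + (1/x)\<^sup>2"
      by (simp add: add_pos_nonneg)
    ultimately show ?thesis
      using that by (simp add: ln_mult)
  qed
  show ?thesis
    by (rule has_bochner_integral_cong[THEN iffD1, OF refl _ _ h])
       (auto simp: indicator_def right_diff_distrib[symmetric] ln_sq)
qed

lemma has_bochner_integral_cauchy_ln_quadratic_Ioi:
  fixes p q :: real
  assumes p: "0 \<le> p" and q: "0 \<le> q" and pq: "0 < sqrt p + sqrt q"
  shows "has_bochner_integral lborel (\<lambda>x. indicator {0<..} x * (cauchy_density x * ln (p*x\<^sup>2 + q)))
           (ln (sqrt p + sqrt q))"
proof (cases "q = 0")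
  case True
  then have "0 < p"
    using p pq by auto
  have h: "has_bochner_integral lborel
      (\<lambda>x. ln p * (indicator {0<..} x * cauchy_density x) + indicator {0<..} x * (cauchy_density x * ln (x\<^sup>2)))
      (ln p * (1/2) + 0)"
    by (intro has_bochner_integral_add has_bochner_integral_mult_right
        has_bochner_integral_cauchy_Ioi has_bochner_integral_cauchy_ln_sq)
  have ln_px: "ln (p*x\<^sup>2) = ln p + ln (x\<^sup>2)" if "0 < x" for x
    using \<open>0 < p\<close> that by (simp add: ln_mult)
  show ?thesis
    by (rule has_bochner_integral_cong[THEN iffD1, OF refl _ _ h])
       (use \<open>0 < p\<close> True in \<open>auto simp: indicator_def algebra_simps ln_sqrt ln_px\<close>)
next
  case False
  then have "0 < q"
    using q by simp
  define c where "c = sqrt p / sqrt q"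
  have h: "has_bochner_integral lborel
      (\<lambda>x. ln q * (indicator {0<..} x * cauchy_density x) + indicator {0<..} x * (cauchy_density x * ln (1 + c\<^sup>2*x\<^sup>2)))
      (ln q * (1/2) + ln (1 + c))"
    using p q by (intro has_bochner_integral_add has_bochner_integral_mult_right
        has_bochner_integral_cauchy_Ioi has_bochner_integral_cauchy_ln_one_plus) (simp add: c_def)
  have ln_pq: "ln (p*x\<^sup>2 + q) = ln q + ln (1 + c\<^sup>2*x\<^sup>2)" for x
  proof -
    have "p*x\<^sup>2 + q = q * (1 + c\<^sup>2*x\<^sup>2)"
      using p \<open>0 < q\<close> by (simp add: c_def power_divide field_simps)
    moreover have "0 < 1 + c\<^sup>2*x\<^sup>2"
      by (simp add: add_pos_nonneg)
    ultimately show ?thesis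
      using \<open>0 < q\<close> by (simp add: ln_mult)
  qed
  have limit_value: "ln q * (1/2) + ln (1 + c) = ln (sqrt p + sqrt q)"
  proof -
    have "1 + c = (sqrt p + sqrt q) / sqrt q"
      using \<open>0 < q\<close> by (simp add: c_def field_simps)
    then show ?thesis
      using \<open>0 < q\<close> pq by (simp add: ln_div ln_sqrt)
  qed
  show ?thesis
    by (rule has_bochner_integral_cong[THEN iffD1, OF refl _ limit_value h])
       (simp add: indicator_def ln_pq distrib_left)
qed

lemma has_bochner_integral_cauchy_measure:
  fixes f :: "real \<Rightarrow> real"
  assumes "f \<in> borel_measurable borel"
    and "has_bochner_integral lborel (\<lambda>x. cauchy_density x * f x) r"
  shows "has_bochner_integral cauchy_measure f r"
  unfolding cauchy_measure_def using assms
  by (intro has_bochner_integral_density) (auto intro!: AE_I2 less_imp_le[OF cauchy_density_pos])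

lemma prob_space_cauchy_measure: "prob_space cauchy_measure"
proof
  have "emeasure cauchy_measure UNIV = (\<integral>\<^sup>+x. ennreal (cauchy_density x) \<partial>lborel)"
    unfolding cauchy_measure_def by (simp add: emeasure_density)
  also have "\<dots> = ennreal 1"
    using has_bochner_integral_cauchy_density
    by (subst nn_integral_eq_integral)
       (auto simp: has_bochner_integral_iff less_imp_le[OF cauchy_density_pos] intro!: AE_I2)
  finally show "emeasure cauchy_measure (space cauchy_measure) = 1"
    by (simp add: cauchy_measure_def)
qed

lemma measure_cauchy_measure_half_lines:
  "measure cauchy_measure {0<..} = 1/2" "measure cauchy_measure {..<0} = 1/2"
proof -
  have "has_bochner_integral lborel (\<lambda>x. cauchy_density x * indicator {0<..} x) (1/2)"
    using has_bochner_integral_cauchy_Ioi by (simp add: mult.commute)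
  moreover have "has_bochner_integral lborel (\<lambda>x. cauchy_density x * indicator {..<0} x) (1/2)"
    by (rule has_bochner_integral_lborel_reflect)
       (use has_bochner_integral_cauchy_Ioi in \<open>auto simp: indicator_def mult.commute\<close>)
  ultimately have "has_bochner_integral cauchy_measure (indicator {0<..}) (1/2 :: real)"
      "has_bochner_integral cauchy_measure (indicator {..<0}) (1/2 :: real)"
    by (auto intro: has_bochner_integral_cauchy_measure)
  then show "measure cauchy_measure {0<..} = 1/2" "measure cauchy_measure {..<0} = 1/2"
    by (auto dest!: has_bochner_integral_integral_eq simp: cauchy_measure_def)
qed

lemma measure_cauchy_measure_half_line_subset:
  assumes "A \<in> sets borel" and "{0<..} \<subseteq> A \<or> {..<0} \<subseteq> A"
  shows "1/2 \<le> measure cauchy_measure A"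
proof -
  interpret prob_space cauchy_measure
    by (rule prob_space_cauchy_measure)
  have "A \<in> sets cauchy_measure"
    using assms(1) by (simp add: cauchy_measure_def)
  then show ?thesis
    using assms(2) finite_measure_mono measure_cauchy_measure_half_lines by metis
qed

lemma has_bochner_integral_cauchy_ln_two_sided_quadratic:
  fixes p m q :: real
  assumes "0 \<le> p" "0 \<le> m" "0 \<le> q" and pq: "0 < sqrt p + sqrt q" and mq: "0 < sqrt m + sqrt q"
  shows "has_bochner_integral cauchy_measure (\<lambda>x. ln (p * (pos_part x)\<^sup>2 + m * (neg_part x)\<^sup>2 + q))
           (ln ((sqrt p + sqrt q) * (sqrt m + sqrt q)))"
proof (rule has_bochner_integral_cauchy_measure)
  show "(\<lambda>x. ln (p * (pos_part x)\<^sup>2 + m * (neg_part x)\<^sup>2 + q)) \<in> borel_measurable borel"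
    unfolding pos_part_def neg_part_def by measurable
  have "has_bochner_integral lborel (\<lambda>x. cauchy_density x * ln (p * (pos_part x)\<^sup>2 + m * (neg_part x)\<^sup>2 + q))
      (ln (sqrt p + sqrt q) + ln (sqrt m + sqrt q))"
  proof (rule has_bochner_integral_lborel_split_at_0)
    show "has_bochner_integral lborel
        (\<lambda>x. indicator {0<..} x * (cauchy_density x * ln (p * (pos_part x)\<^sup>2 + m * (neg_part x)\<^sup>2 + q)))
        (ln (sqrt p + sqrt q))"
      by (rule has_bochner_integral_cong[THEN iffD1, OF refl _ refl
            has_bochner_integral_cauchy_ln_quadratic_Ioi])
         (use assms in \<open>auto simp: indicator_def pos_part_def neg_part_def\<close>)
    show "has_bochner_integral lborel
        (\<lambda>x. indicator {0<..} x * (cauchy_density (- x) * ln (p * (pos_part (- x))\<^sup>2 + m * (neg_part (- x))\<^sup>2 + q)))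
        (ln (sqrt m + sqrt q))"
      by (rule has_bochner_integral_cong[THEN iffD1, OF refl _ refl
            has_bochner_integral_cauchy_ln_quadratic_Ioi])
         (use assms in \<open>auto simp: indicator_def pos_part_def neg_part_def\<close>)
  qed (unfold pos_part_def neg_part_def, measurable)
  then show "has_bochner_integral lborel (\<lambda>x. cauchy_density x * ln (p * (pos_part x)\<^sup>2 + m * (neg_part x)\<^sup>2 + q))
      (ln ((sqrt p + sqrt q) * (sqrt m + sqrt q)))"
    using pq mq by (simp add: ln_mult)
qed

theorem mainTheorem8:
  fixes phip phim psi :: real
  assumes "phip \<ge> 0" and "phim \<ge> 0" and "psi \<ge> 0"
  defines "g \<equiv> (\<lambda>x. phip * (pos_part x)\<^sup>2 + phim * (neg_part x)\<^sup>2 + psi)"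
      and "R \<equiv> (sqrt phip + sqrt psi) * (sqrt phim + sqrt psi)"
  shows "(R > 0 \<longrightarrow>
            integrable cauchy_measure (\<lambda>x. ln (g x)) \<and>
            (\<integral>x. ln (g x) \<partial>cauchy_measure) = ln R)
       \<and> (R = 0 \<longrightarrow> measure cauchy_measure {x. g x = 0} > 0)"
proof -
  have "has_bochner_integral cauchy_measure (\<lambda>x. ln (g x)) (ln R)" if "R > 0"
  proof -
    have "0 < sqrt phip + sqrt psi" "0 < sqrt phim + sqrt psi"
      using that assms(1-3) unfolding R_def zero_less_mult_iff
      by (metis add_nonneg_nonneg real_sqrt_ge_zero not_le)+
    then show ?thesis
      using has_bochner_integral_cauchy_ln_two_sided_quadratic[OF assms(1-3)] unfolding g_def R_def by blast
  qed
  moreover have "measure cauchy_measure {x. g x = 0} > 0" if "R = 0"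
  proof -
    have "psi = 0" and "phip = 0 \<or> phim = 0"
      using that assms(1-3) unfolding R_def by (auto simp: add_nonneg_eq_0_iff)
    then have "{0<..} \<subseteq> {x. g x = 0} \<or> {..<0} \<subseteq> {x. g x = 0}"
      by (auto simp: g_def pos_part_def neg_part_def)
    moreover have "{x. g x = 0} \<in> sets borel"
      unfolding g_def pos_part_def neg_part_def by measurable
    ultimately show ?thesis
      using measure_cauchy_measure_half_line_subset by fastforce
  qed
  ultimately show ?thesis
    by (auto simp: has_bochner_integral_iff)
qed

end
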